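(* Let $\Sigma$ be a set and let $1\leq p<\infty$. Suppose $d$ is a separating quasi-metric on $\Sigma$ and $\gamma,\delta\in\Gamma_{\mathrm{CL}}(\Sigma)$ are composition-length gap penalties such that for all $a,b\in\Sigma$, \[\gamma(b)-\gamma(a)\leq d^p(a,b)\quad\text{and}\quad \delta(a)-\delta(b)\leq d^p(a,b).\] Let $\alpha=\gamma^{1/p}$ and $\beta=\delta^{1/p}$. Then the $\ell^p$ edit distance $D$ on $\Sigma^*$ extending $d$, $\alpha$ and $\beta$ is a separating quasi-metric on $\Sigma^*$.
   Context: $\Sigma^*$ is the free monoid on $\Sigma$ (finite words, operation concatenation, identity the empty word $e$), and $\Sigma^+=\Sigma^*\setminus\{e\}$. For $w=w_1\cdots w_n$ ($w_i\in\Sigma$) write $|w|=n$, $\bar w_k=w_1\cdots w_k$ and $\bar w_0=e$. A quasi-metric on a set $X$ is a map $q:X\times X\to\mathbb{R}_{\ge0}$ with $q(x,y)=q(y,x)=0\iff x=y$ and $q(x,z)\le q(x,y)+q(y,z)$; it is separating if $q(x,y)=0$ implies $x=y$. A gap penalty over $\Sigma^+$ is a positive function $\gamma:\Sigma^+\to\mathbb{R}$ with $\gamma(u)+\gamma(v)\ge\gamma(uv)$ for all $u,v\in\Sigma^+$; $\Gamma(\Sigma)$ denotes the set of these. A function $\gamma$ is increasing if $\gamma(uxv)\ge\gamma(uv)$ for all $u,v,x\in\Sigma^*$. A composition-length gap penalty is an increasing $\gamma\in\Gamma(\Sigma)$ of the form $\gamma(z)=\sum_i\phi(z_i)+\psi(|z|)$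 for all $z\in\Sigma^+$, for some $\phi:\Sigma\to\mathbb{R}$ and $\psi:\mathbb{N}\to\mathbb{R}$; $\Gamma_{\mathrm{CL}}(\Sigma)$ denotes the set of these. $\ell^p$ edit distance: given $d:\Sigma\times\Sigma\to\mathbb{R}$, $1\le p<\infty$, and $\alpha,\beta:\Sigma^+\to\mathbb{R}$ with $\alpha^p,\beta^p\in\Gamma(\Sigma)$, for $x,y\in\Sigma^*$ with $m=|x|$, $n=|y|$ define recursively $D(e,e)=0$, $D(e,\bar y_j)=\alpha(\bar y_j)$ ($1\le j\le n$), $D(\bar x_i,e)=\beta(\bar x_i)$ ($1\le i\le m$), and for $1\le i\le m$, $1\le j\le n$, \[D(\bar x_i,\bar y_j)=\Big(\min\Big\{D^p(\bar x_{i-1},\bar y_{j-1})+d^p(x_i,y_j),\ \min_{1\le k\le j}\{D^p(\bar x_i,\bar y_{j-k})+\alpha^p(y_{j-k+1}\cdots y_j)\},\ \min_{1\le k\le i}\{D^p(\bar x_{i-k},\bar y_j)+\beta^p(x_{i-k+1}\cdots x_i)\}\Big\}\Big)^{1/p},\] and set $D(x,y)=D(\bar x_m,\bar y_n)$. *)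

theory Defs
  imports Complex_Main
begin

definition quasi_metric :: "('b \<Rightarrow> 'b \<Rightarrow> real) \<Rightarrow> bool" where
  "quasi_metric q \<longleftrightarrow>
     (\<forall>x y. q x y \<ge> 0) \<and>
     (\<forall>x y. (q x y = 0 \<and> q y x = 0) \<longleftrightarrow> x = y) \<and>
     (\<forall>x y z. q x z \<le> q x y + q y z)"

definition separating :: "('b \<Rightarrow> 'b \<Rightarrow> real) \<Rightarrow> bool" where
  "separating q \<longleftrightarrow> (\<forall>x y. q x y = 0 \<longrightarrow> x = y)"

(* gap penalty: only its values on nonempty words matter *)
definition gap_penalty :: "('a list \<Rightarrow> real) \<Rightarrow> bool" where
  "gap_penalty g \<longleftrightarrow>
     (\<forall>u. u \<noteq> [] \<longrightarrow> g u > 0) \<and>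
     (\<forall>u v. u \<noteq> [] \<longrightarrow> v \<noteq> [] \<longrightarrow> g (u @ v) \<le> g u + g v)"

definition increasing_gp :: "('a list \<Rightarrow> real) \<Rightarrow> bool" where
  "increasing_gp g \<longleftrightarrow> (\<forall>u x v. u @ v \<noteq> [] \<longrightarrow> g (u @ v) \<le> g (u @ x @ v))"

definition CL_gap_penalty :: "('a list \<Rightarrow> real) \<Rightarrow> bool" where
  "CL_gap_penalty g \<longleftrightarrow> gap_penalty g \<and> increasing_gp g \<and>
     (\<exists>(\<phi>::'a \<Rightarrow> real) (\<psi>::nat \<Rightarrow> real).
        \<forall>z. z \<noteq> [] \<longrightarrow> g z = sum_list (map \<phi> z) + \<psi> (length z))"

(* Dtab p d \<alpha> \<beta> x y i j = D(x_1..x_i, y_1..y_j) *)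
function Dtab :: "real \<Rightarrow> ('a \<Rightarrow> 'a \<Rightarrow> real) \<Rightarrow> ('a list \<Rightarrow> real) \<Rightarrow> ('a list \<Rightarrow> real)
                  \<Rightarrow> 'a list \<Rightarrow> 'a list \<Rightarrow> nat \<Rightarrow> nat \<Rightarrow> real" where
  "Dtab p d \<alpha> \<beta> x y i j =
    (if i = 0 \<and> j = 0 then 0
     else if i = 0 then \<alpha> (take j y)
     else if j = 0 then \<beta> (take i x)
     else (Min ({(Dtab p d \<alpha> \<beta> x y (i - 1) (j - 1)) powr p + (d (x ! (i - 1)) (y ! (j - 1))) powr p}
            \<union> set (map (\<lambda>k. (Dtab p d \<alpha> \<beta> x y i (j - k)) powr p + (\<alpha> (drop (j - k) (take j y))) powr p) [1..<Suc j])
            \<union> set (map (\<lambda>k. (Dtab p d \<alpha> \<beta> x y (i - k) j) powr p + (\<beta> (drop (i - k) (take i x))) powr p) [1..<Suc i])))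
          powr (1 / p))"
  by pat_completeness auto
termination
  by (relation "measure (\<lambda>(p, d, \<alpha>, \<beta>, x, y, i, j). i + j)") auto

definition lp_edit_distance ::
  "real \<Rightarrow> ('a \<Rightarrow> 'a \<Rightarrow> real) \<Rightarrow> ('a list \<Rightarrow> real) \<Rightarrow> ('a list \<Rightarrow> real) \<Rightarrow> 'a list \<Rightarrow> 'a list \<Rightarrow> real" where
  "lp_edit_distance p d \<alpha> \<beta> x y = Dtab p d \<alpha> \<beta> x y (length x) (length y)"

end

theory Submission
  imports Defs "HOL-Analysis.Convex"
begin

text \<open>The \<open>p\<close>-th power of the table, \<open>cost = D powr p\<close>, satisfies an ordinary min-plus
  recursion with edit costs \<open>d powr p\<close>, \<open>\<gamma>\<close> and \<open>\<delta>\<close>. Separation and \<open>D x x = 0\<close> are read off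
  the last edit of an optimal alignment. The triangle inequality is proved by induction on
  \<open>|x| + |y| + |z|\<close>, composing the last edits of optimal alignments of \<open>x\<close> with \<open>y\<close> and of
  \<open>y\<close> with \<open>z\<close>; every such composition is an instance of Minkowski's inequality in the plane.
  The hard case is an alignment of \<open>x\<close> with \<open>y\<close> ending in the insertion of a block \<open>Y\<close> of \<open>y\<close>:
  the alignment of \<open>y\<close> with \<open>z\<close> is then cut at the start of \<open>Y\<close>, and the composition-length
  form of \<open>\<gamma>\<close> together with \<open>\<gamma> [b] - \<gamma> [a] \<le> d a b powr p\<close> shows that inserting the block of
  \<open>z\<close> beyond the cut costs at most inserting \<open>Y\<close> plus the cost of aligning \<open>Y\<close> with that block.
  An alignment of \<open>y\<close> with \<open>z\<close> ending in a deletion from \<open>y\<close> is the mirror image, obtained by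
  transposing all alignments.\<close>

declare Dtab.simps [simp del]

lemma Dtab_zero_zero: "Dtab p d \<alpha> \<beta> x y 0 0 = 0"
  by (subst Dtab.simps) simp

lemma Dtab_zero_left: "0 < j \<Longrightarrow> Dtab p d \<alpha> \<beta> x y 0 j = \<alpha> (take j y)"
  by (subst Dtab.simps) simp

lemma Dtab_zero_right: "0 < i \<Longrightarrow> Dtab p d \<alpha> \<beta> x y i 0 = \<beta> (take i x)"
  by (subst Dtab.simps) simp

lemma Dtab_swap: "Dtab p d \<alpha> \<beta> x y i j = Dtab p (\<lambda>a b. d b a) \<beta> \<alpha> y x j i"
proof (induction "i + j" arbitrary: i j rule: less_induct)
  case less
  show ?case
  proof (cases "i = 0 \<or> j = 0")
    case True
    then show ?thesis
      by (cases "i = 0"; cases "j = 0") (simp_all add: Dtab_zero_zero Dtab_zero_left Dtab_zero_right)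
  next
    case False
    then have nonzero: "i \<noteq> 0" "j \<noteq> 0" by auto
    have ins: "set (map (\<lambda>k. Dtab p d \<alpha> \<beta> x y i (j - k) powr p + \<alpha> (drop (j - k) (take j y)) powr p) [1..<Suc j])
      = set (map (\<lambda>k. Dtab p (\<lambda>a b. d b a) \<beta> \<alpha> y x (j - k) i powr p + \<alpha> (drop (j - k) (take j y)) powr p) [1..<Suc j])"
      by (auto intro!: image_cong simp: less.hyps)
    have del: "set (map (\<lambda>k. Dtab p d \<alpha> \<beta> x y (i - k) j powr p + \<beta> (drop (i - k) (take i x)) powr p) [1..<Suc i])
      = set (map (\<lambda>k. Dtab p (\<lambda>a b. d b a) \<beta> \<alpha> y x j (i - k) powr p + \<beta> (drop (i - k) (take i x)) powr p) [1..<Suc i])"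
      by (auto intro!: image_cong simp: less.hyps)
    have match: "Dtab p d \<alpha> \<beta> x y (i - 1) (j - 1) = Dtab p (\<lambda>a b. d b a) \<beta> \<alpha> y x (j - 1) (i - 1)"
      using less.hyps nonzero by simp
    show ?thesis
      by (subst (1 2) Dtab.simps) (simp only: ins del match nonzero if_False simp_thms Un_ac)
  qed
qed

lemma convex_powr_nonneg:
  fixes p t a b :: real
  assumes p: "1 \<le> p" and a: "0 \<le> a" and b: "0 \<le> b" and t: "0 \<le> t" "t \<le> 1"
  shows "(t * a + (1 - t) * b) powr p \<le> t * a powr p + (1 - t) * b powr p"
proof -
  have shrink: "(s * c) powr p \<le> s * c powr p" if "0 \<le> s" "s \<le> 1" "0 \<le> c" for s c :: real
  proof -
    have "s powr p \<le> s" using powr_mono'[of 1 p s] that p by simp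
    then show ?thesis using that by (simp add: powr_mult mult_right_mono)
  qed
  consider "a = 0" | "b = 0" | "0 < a" "0 < b" using a b by linarith
  then show ?thesis
  proof cases
    case 1
    then show ?thesis using shrink[of "1 - t" b] t b p by simp
  next
    case 2
    then show ?thesis using shrink[of t a] t a p by simp
  next
    case 3
    then show ?thesis using convex_onD[OF powr_convex[OF p], of "1 - t" a b] t by simp
  qed
qed

text \<open>Minkowski's inequality in the plane: normalising by \<open>U + V\<close>, it is the convexity
  of \<open>t powr p\<close> applied with the weights \<open>U / (U + V)\<close> and \<open>V / (U + V)\<close>.\<close>

lemma minkowski_powr2:
  fixes p u1 u2 v1 v2 :: real
  assumes p: "1 \<le> p" and nonneg: "0 \<le> u1" "0 \<le> u2" "0 \<le> v1" "0 \<le> v2"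
  shows "((u1 + v1) powr p + (u2 + v2) powr p) powr (1/p)
         \<le> (u1 powr p + u2 powr p) powr (1/p) + (v1 powr p + v2 powr p) powr (1/p)"
proof -
  define U where "U = (u1 powr p + u2 powr p) powr (1/p)"
  define V where "V = (v1 powr p + v2 powr p) powr (1/p)"
  have p0: "0 < p" using p by simp
  have U_pow: "U powr p = u1 powr p + u2 powr p" and V_pow: "V powr p = v1 powr p + v2 powr p"
    unfolding U_def V_def using p0 by (simp_all add: powr_powr)
  show ?thesis
  proof (cases "U = 0 \<or> V = 0")
    case True
    then have "u1 = 0 \<and> u2 = 0 \<or> v1 = 0 \<and> v2 = 0"
      using nonneg unfolding U_def V_def by (smt (verit) powr_eq_0_iff powr_ge_zero)
    then show ?thesis using p0 by (auto simp: powr_powr)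
  next
    case False
    then have U0: "0 < U" and V0: "0 < V" unfolding U_def V_def by auto
    define t where "t = U / (U + V)"
    have t: "0 \<le> t" "t \<le> 1" "1 - t = V / (U + V)"
      unfolding t_def using U0 V0 by (auto simp: field_simps)
    have convex: "((u + v) / (U + V)) powr p \<le> t * (u powr p / U powr p) + (1 - t) * (v powr p / V powr p)"
      if "0 \<le> u" "0 \<le> v" for u v
    proof -
      have "(u + v) / (U + V) = t * (u / U) + (1 - t) * (v / V)"
        unfolding t(3) unfolding t_def using U0 V0 by (simp add: add_divide_distrib)
      then show ?thesis
        using convex_powr_nonneg[OF p _ _ t(1,2), of "u / U" "v / V"] that U0 V0
        by (simp add: powr_divide)
    qed
    have "((u1 + v1) / (U + V)) powr p + ((u2 + v2) / (U + V)) powr p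
          \<le> t * ((u1 powr p + u2 powr p) / U powr p) + (1 - t) * ((v1 powr p + v2 powr p) / V powr p)"
      using convex[of u1 v1] convex[of u2 v2] nonneg by (simp add: add_divide_distrib algebra_simps)
    also have "\<dots> = 1" using U0 V0 by (simp add: U_pow[symmetric] V_pow[symmetric])
    finally have "(u1 + v1) powr p + (u2 + v2) powr p \<le> (U + V) powr p"
      using U0 V0 nonneg by (simp add: powr_divide divide_simps add_pos_pos)
    then have "((u1 + v1) powr p + (u2 + v2) powr p) powr (1/p) \<le> ((U + V) powr p) powr (1/p)"
      using p0 by (intro powr_mono2) auto
    also have "\<dots> = U + V" using U0 V0 p0 by (simp add: powr_powr)
    finally show ?thesis unfolding U_def V_def .
  qed
qed

lemma powr_inverse_subadditive:
  fixes p a b c :: real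
  assumes "1 \<le> p" "0 \<le> a" "0 \<le> b" "0 \<le> c" "c \<le> a + b"
  shows "c powr (1/p) \<le> a powr (1/p) + b powr (1/p)"
proof -
  have "c powr (1/p) \<le> (a + b) powr (1/p)" using assms by (intro powr_mono2) auto
  also have "\<dots> \<le> a powr (1/p) + b powr (1/p)"
    using minkowski_powr2[OF assms(1), of "a powr (1/p)" 0 0 "b powr (1/p)"] assms
    by (simp add: powr_powr)
  finally show ?thesis .
qed

text \<open>Composition step of the triangle inequality: \<open>X\<close> arises from \<open>X'\<close> by one more edit of cost
  \<open>c\<close>, which is split as \<open>a\<close> and \<open>b\<close> between the two sides \<open>A\<close> and \<open>B\<close>.\<close>

lemma lp_triangle_step:
  fixes p X X' A A' B B' a b c :: real
  assumes p: "1 \<le> p"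
    and nonneg: "0 \<le> X" "0 \<le> X'" "0 \<le> A'" "0 \<le> B'" "0 \<le> a" "0 \<le> b" "0 \<le> c"
    and X: "X \<le> X' + c"
    and X': "X' powr (1/p) \<le> A' powr (1/p) + B' powr (1/p)"
    and c: "c powr (1/p) \<le> a powr (1/p) + b powr (1/p)"
    and A: "A' + a \<le> A" and B: "B' + b \<le> B"
  shows "X powr (1/p) \<le> A powr (1/p) + B powr (1/p)"
proof -
  have p0: "0 < p" using p by simp
  have root_pow: "(w powr (1/p)) powr p = w" if "0 \<le> w" for w :: real
    using that p0 by (simp add: powr_powr)
  have pow_le: "w \<le> s powr p" if "0 \<le> w" "w powr (1/p) \<le> s" for w s :: real
    using powr_mono2[OF p0[THEN less_imp_le] _ that(2)] root_pow[OF that(1)] by simp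
  define u1 u2 v1 v2 where "u1 = A' powr (1/p)" "u2 = a powr (1/p)" "v1 = B' powr (1/p)" "v2 = b powr (1/p)"
  have "X \<le> (u1 + v1) powr p + (u2 + v2) powr p"
    using X pow_le[OF nonneg(2) X'] pow_le[OF nonneg(7) c] unfolding u1_u2_v1_v2_def by simp
  then have "X powr (1/p) \<le> ((u1 + v1) powr p + (u2 + v2) powr p) powr (1/p)"
    using p0 nonneg by (intro powr_mono2) auto
  also have "\<dots> \<le> (u1 powr p + u2 powr p) powr (1/p) + (v1 powr p + v2 powr p) powr (1/p)"
    by (rule minkowski_powr2[OF p]) (auto simp: u1_u2_v1_v2_def)
  also have "\<dots> = (A' + a) powr (1/p) + (B' + b) powr (1/p)"
    unfolding u1_u2_v1_v2_def using root_pow nonneg by simp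
  also have "\<dots> \<le> A powr (1/p) + B powr (1/p)"
    using A B nonneg p0 by (intro add_mono powr_mono2) auto
  finally show ?thesis .
qed

lemma drop_take_split:
  assumes "a \<le> b" "b \<le> c"
  shows "drop a (take c y) = drop a (take b y) @ drop b (take c y)"
proof (cases "b \<le> length y")
  case True
  have "take c y = take b y @ drop b (take c y)"
    using assms by (metis append_take_drop_id min.absorb1 take_take)
  then have "drop a (take c y) = drop a (take b y @ drop b (take c y))"
    by (rule arg_cong)
  also have "\<dots> = drop a (take b y) @ drop b (take c y)"
    using assms True by (simp add: drop_append)
  finally show ?thesis .
next
  case False
  then show ?thesis using assms by simp
qed

lemma drop_take_last:
  assumes "0 < j" "j \<le> length y"
  shows "drop (j - 1) (take j y) = [y ! (j - 1)]"
  using assms by (cases j) (simp_all add: take_Suc_conv_app_nth)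

lemma drop_take_nonempty:
  assumes "1 \<le> k" "k \<le> j" "j \<le> length y"
  shows "drop (j - k) (take j y) \<noteq> []"
  using assms by simp

lemma CL_gap_penalty_gap_penalty: "CL_gap_penalty g \<Longrightarrow> gap_penalty g"
  and CL_gap_penalty_increasing: "CL_gap_penalty g \<Longrightarrow> increasing_gp g"
  by (simp_all add: CL_gap_penalty_def)

lemma CL_gap_penalty_swap:
  assumes "CL_gap_penalty g"
  shows "g (u @ v @ w) = g (u @ w @ v)"
proof -
  obtain \<phi> \<psi> where g: "\<And>z. z \<noteq> [] \<Longrightarrow> g z = sum_list (map \<phi> z) + \<psi> (length z)"
    using assms unfolding CL_gap_penalty_def by blast
  show ?thesis
  proof (cases "u @ v @ w = []")
    case False
    moreover have "u @ w @ v \<noteq> []" using False by auto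
    ultimately show ?thesis by (simp add: g add_ac)
  qed simp
qed

lemma CL_gap_penalty_replace:
  assumes "CL_gap_penalty g"
  shows "g (u @ [b] @ w) = g (u @ [a] @ w) + (g [b] - g [a])"
proof -
  obtain \<phi> \<psi> where g: "\<And>z. z \<noteq> [] \<Longrightarrow> g z = sum_list (map \<phi> z) + \<psi> (length z)"
    using assms unfolding CL_gap_penalty_def by blast
  show ?thesis by (simp add: g)
qed

text \<open>The invariant that lets the insertion of a block of \<open>y\<close> be traded for the insertion of
  the block of \<open>z\<close> aligned with it.\<close>

definition gap_transfer :: "('a list \<Rightarrow> real) \<Rightarrow> 'a list \<Rightarrow> 'a list \<Rightarrow> real \<Rightarrow> bool" where
  "gap_transfer g Z Y R \<longleftrightarrow> (\<forall>P. Z @ P \<noteq> [] \<longrightarrow> g (Z @ P) \<le> g (Y @ P) + R)"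

lemma gap_transfer_refl: "gap_transfer g Y Y 0"
  by (simp add: gap_transfer_def)

lemma gap_transfer_mono: "gap_transfer g Z Y R \<Longrightarrow> R \<le> R' \<Longrightarrow> gap_transfer g Z Y R'"
  unfolding gap_transfer_def by (smt (verit))

lemma gap_transfer_Nil:
  assumes "increasing_gp g"
  shows "gap_transfer g [] Y 0"
  unfolding gap_transfer_def
  using assms[unfolded increasing_gp_def, rule_format, of "[]" _ Y] by simp

lemma gap_transfer_snoc:
  assumes "CL_gap_penalty g" "gap_transfer g Z Y R"
  shows "gap_transfer g (Z @ [c]) (Y @ [b]) (R + (g [c] - g [b]))"
  unfolding gap_transfer_def
proof (intro allI impI)
  fix P
  have "g (Z @ [c] @ P) \<le> g (Y @ [c] @ P) + R"
    using assms(2) unfolding gap_transfer_def by simp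
  also have "\<dots> = g (Y @ [b] @ P) + (R + (g [c] - g [b]))"
    using CL_gap_penalty_replace[OF assms(1)] by simp
  finally show "g ((Z @ [c]) @ P) \<le> g ((Y @ [b]) @ P) + (R + (g [c] - g [b]))" by simp
qed

lemma gap_transfer_append_left:
  assumes "CL_gap_penalty g" "gap_transfer g Z Y R" "0 \<le> R" "Y \<noteq> []" "U \<noteq> []"
  shows "gap_transfer g (Z @ U) Y (R + g U)"
  unfolding gap_transfer_def
proof (intro allI impI)
  fix P
  have g: "gap_penalty g" by (rule CL_gap_penalty_gap_penalty[OF assms(1)])
  show "g ((Z @ U) @ P) \<le> g (Y @ P) + (R + g U)"
  proof (cases "Z @ P = []")
    case True
    have "0 < g (Y @ P)" using g assms(4) unfolding gap_penalty_def by simp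
    then show ?thesis using True assms(3) by simp
  next
    case False
    have "g (Z @ U @ P) = g ((Z @ P) @ U)" using CL_gap_penalty_swap[OF assms(1)] by simp
    also have "\<dots> \<le> g (Z @ P) + g U" using g False assms(5) unfolding gap_penalty_def by blast
    also have "\<dots> \<le> g (Y @ P) + R + g U" using assms(2) False unfolding gap_transfer_def by simp
    finally show ?thesis by simp
  qed
qed

lemma gap_transfer_append_right:
  assumes "increasing_gp g" "gap_transfer g Z Y R"
  shows "gap_transfer g Z (Y @ V) R"
  unfolding gap_transfer_def
proof (intro allI impI)
  fix P assume "Z @ P \<noteq> []"
  then have "g (Z @ P) \<le> g (Z @ V @ P)" using assms(1) unfolding increasing_gp_def by blast
  also have "\<dots> \<le> g (Y @ V @ P) + R" using assms(2) \<open>Z @ P \<noteq> []\<close> unfolding gap_transfer_def by simp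
  finally show "g (Z @ P) \<le> g ((Y @ V) @ P) + R" by simp
qed

locale lp_edit_cost =
  fixes p :: real and d :: "'a \<Rightarrow> 'a \<Rightarrow> real" and \<gamma> \<delta> :: "'a list \<Rightarrow> real"
  assumes one_le_p: "1 \<le> p" and d_nonneg: "\<And>a b. 0 \<le> d a b"
    and gap_\<gamma>: "gap_penalty \<gamma>" and gap_\<delta>: "gap_penalty \<delta>"
begin

abbreviation D :: "'a list \<Rightarrow> 'a list \<Rightarrow> nat \<Rightarrow> nat \<Rightarrow> real" where
  "D \<equiv> Dtab p d (\<lambda>w. \<gamma> w powr (1/p)) (\<lambda>w. \<delta> w powr (1/p))"

definition cost :: "'a list \<Rightarrow> 'a list \<Rightarrow> nat \<Rightarrow> nat \<Rightarrow> real" where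
  "cost x y i j = D x y i j powr p"

lemma p_pos: "0 < p"
  using one_le_p by simp

lemma \<gamma>_pos: "u \<noteq> [] \<Longrightarrow> 0 < \<gamma> u"
  and \<delta>_pos: "u \<noteq> [] \<Longrightarrow> 0 < \<delta> u"
  using gap_\<gamma> gap_\<delta> unfolding gap_penalty_def by auto

lemma \<gamma>_subadditive: "u \<noteq> [] \<Longrightarrow> v \<noteq> [] \<Longrightarrow> \<gamma> (u @ v) \<le> \<gamma> u + \<gamma> v"
  and \<delta>_subadditive: "u \<noteq> [] \<Longrightarrow> v \<noteq> [] \<Longrightarrow> \<delta> (u @ v) \<le> \<delta> u + \<delta> v"
  using gap_\<gamma> gap_\<delta> unfolding gap_penalty_def by auto

lemma root_powr_cancel: "0 \<le> w \<Longrightarrow> (w powr (1/p)) powr p = w"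
  using p_pos by (simp add: powr_powr)

lemma D_nonneg: "0 \<le> D x y i j"
  by (subst Dtab.simps) auto

lemma cost_nonneg: "0 \<le> cost x y i j"
  by (simp add: cost_def)

lemma D_eq_root_cost: "D x y i j = cost x y i j powr (1/p)"
  unfolding cost_def using p_pos D_nonneg[of x y i j] by (simp add: powr_powr)

lemma cost_zero_zero: "cost x y 0 0 = 0"
  by (simp add: cost_def Dtab_zero_zero)

lemma cost_zero_left:
  assumes "0 < j" "j \<le> length y"
  shows "cost x y 0 j = \<gamma> (take j y)"
proof -
  have "take j y \<noteq> []" using assms by auto
  then show ?thesis using assms by (simp add: cost_def Dtab_zero_left root_powr_cancel less_imp_le[OF \<gamma>_pos])
qed

lemma cost_zero_right:
  assumes "0 < i" "i \<le> length x"
  shows "cost x y i 0 = \<delta> (take i x)"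
proof -
  have "take i x \<noteq> []" using assms by auto
  then show ?thesis using assms by (simp add: cost_def Dtab_zero_right root_powr_cancel less_imp_le[OF \<delta>_pos])
qed

lemma cost_eq_Min:
  assumes "0 < i" "0 < j" "i \<le> length x" "j \<le> length y"
  shows "cost x y i j = Min ({cost x y (i - 1) (j - 1) + d (x ! (i - 1)) (y ! (j - 1)) powr p}
          \<union> (\<lambda>k. cost x y i (j - k) + \<gamma> (drop (j - k) (take j y))) ` {1..j}
          \<union> (\<lambda>k. cost x y (i - k) j + \<delta> (drop (i - k) (take i x))) ` {1..i})"
    (is "_ = Min ?M")
proof -
  have ins: "set (map (\<lambda>k. cost x y i (j - k) + (\<gamma> (drop (j - k) (take j y)) powr (1/p)) powr p)
      [1..<Suc j]) = (\<lambda>k. cost x y i (j - k) + \<gamma> (drop (j - k) (take j y))) ` {1..j}"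
    unfolding set_map set_upt atLeastLessThanSuc_atLeastAtMost
    using assms by (intro image_cong) (auto intro!: root_powr_cancel less_imp_le[OF \<gamma>_pos])
  have del: "set (map (\<lambda>k. cost x y (i - k) j + (\<delta> (drop (i - k) (take i x)) powr (1/p)) powr p)
      [1..<Suc i]) = (\<lambda>k. cost x y (i - k) j + \<delta> (drop (i - k) (take i x))) ` {1..i}"
    unfolding set_map set_upt atLeastLessThanSuc_atLeastAtMost
    using assms by (intro image_cong) (auto intro!: root_powr_cancel less_imp_le[OF \<delta>_pos])
  have nonzero: "i \<noteq> 0" "j \<noteq> 0" using assms by auto
  have D_eq: "D x y i j = Min ?M powr (1/p)"
    by (subst Dtab.simps) (simp only: nonzero if_False simp_thms cost_def[symmetric] ins del)
  have "0 \<le> \<gamma> (drop (j - k) (take j y))" if "k \<in> {1..j}" for k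
    using that assms by (intro less_imp_le[OF \<gamma>_pos] drop_take_nonempty) auto
  moreover have "0 \<le> \<delta> (drop (i - k) (take i x))" if "k \<in> {1..i}" for k
    using that assms by (intro less_imp_le[OF \<delta>_pos] drop_take_nonempty) auto
  ultimately have "\<forall>m \<in> ?M. 0 \<le> m"
    by (auto intro!: add_nonneg_nonneg cost_nonneg)
  moreover have "Min ?M \<in> ?M" by (intro Min_in) auto
  ultimately show ?thesis unfolding cost_def D_eq by (simp add: root_powr_cancel)
qed

lemma cost_le_subst:
  assumes "0 < i" "0 < j" "i \<le> length x" "j \<le> length y"
  shows "cost x y i j \<le> cost x y (i - 1) (j - 1) + d (x ! (i - 1)) (y ! (j - 1)) powr p"
  unfolding cost_eq_Min[OF assms] by (rule Min_le) auto

lemma cost_le_insert: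
  assumes "i \<le> length x" "1 \<le> k" "k \<le> j" "j \<le> length y"
  shows "cost x y i j \<le> cost x y i (j - k) + \<gamma> (drop (j - k) (take j y))"
proof (cases "i = 0")
  case False
  then have ij: "0 < i" "0 < j" using assms by auto
  show ?thesis unfolding cost_eq_Min[OF ij assms(1,4)] using assms by (intro Min_le) auto
next
  case True
  show ?thesis
  proof (cases "k = j")
    case True
    then show ?thesis using \<open>i = 0\<close> assms by (simp add: cost_zero_left cost_zero_zero)
  next
    case False
    then have "0 < j - k" using assms by simp
    have "take j y = take (j - k) y @ drop (j - k) (take j y)"
      using drop_take_split[of 0 "j - k" j y] by simp
    then have "\<gamma> (take j y) = \<gamma> (take (j - k) y @ drop (j - k) (take j y))"
      by (rule arg_cong)
    also have "\<dots> \<le> \<gamma> (take (j - k) y) + \<gamma> (drop (j - k) (take j y))"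
      using \<open>0 < j - k\<close> assms by (intro \<gamma>_subadditive drop_take_nonempty) auto
    finally show ?thesis using \<open>i = 0\<close> \<open>0 < j - k\<close> assms by (simp add: cost_zero_left)
  qed
qed

lemma cost_le_delete:
  assumes "j \<le> length y" "1 \<le> k" "k \<le> i" "i \<le> length x"
  shows "cost x y i j \<le> cost x y (i - k) j + \<delta> (drop (i - k) (take i x))"
proof (cases "j = 0")
  case False
  then have ij: "0 < i" "0 < j" using assms by auto
  show ?thesis unfolding cost_eq_Min[OF ij assms(4,1)] using assms by (intro Min_le) auto
next
  case True
  show ?thesis
  proof (cases "k = i")
    case True
    then show ?thesis using \<open>j = 0\<close> assms by (simp add: cost_zero_right cost_zero_zero)
  next
    case False
    then have "0 < i - k" using assms by simp
    have "take i x = take (i - k) x @ drop (i - k) (take i x)"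
      using drop_take_split[of 0 "i - k" i x] by simp
    then have "\<delta> (take i x) = \<delta> (take (i - k) x @ drop (i - k) (take i x))"
      by (rule arg_cong)
    also have "\<dots> \<le> \<delta> (take (i - k) x) + \<delta> (drop (i - k) (take i x))"
      using \<open>0 < i - k\<close> assms by (intro \<delta>_subadditive drop_take_nonempty) auto
    finally show ?thesis using \<open>j = 0\<close> \<open>0 < i - k\<close> assms by (simp add: cost_zero_right)
  qed
qed

lemma cost_cases:
  assumes "i \<le> length x" "j \<le> length y" "0 < i + j"
  obtains (subst) "0 < i" "0 < j"
      "cost x y i j = cost x y (i - 1) (j - 1) + d (x ! (i - 1)) (y ! (j - 1)) powr p"
    | (insert) k where "1 \<le> k" "k \<le> j" "cost x y i j = cost x y i (j - k) + \<gamma> (drop (j - k) (take j y))"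
    | (delete) k where "1 \<le> k" "k \<le> i" "cost x y i j = cost x y (i - k) j + \<delta> (drop (i - k) (take i x))"
proof -
  consider "i = 0" | "j = 0" | "0 < i" "0 < j" by linarith
  then show ?thesis
  proof cases
    case 1
    then show ?thesis using insert[of j] assms by (simp add: cost_zero_left cost_zero_zero)
  next
    case 2
    then show ?thesis using delete[of i] assms by (simp add: cost_zero_right cost_zero_zero)
  next
    case 3
    let ?M = "{cost x y (i - 1) (j - 1) + d (x ! (i - 1)) (y ! (j - 1)) powr p}
      \<union> (\<lambda>k. cost x y i (j - k) + \<gamma> (drop (j - k) (take j y))) ` {1..j}
      \<union> (\<lambda>k. cost x y (i - k) j + \<delta> (drop (i - k) (take i x))) ` {1..i}"
    have "Min ?M \<in> ?M" by (intro Min_in) auto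
    then have "cost x y i j \<in> ?M" using cost_eq_Min[OF 3 assms(1,2)] by simp
    then show ?thesis using 3 subst insert delete by auto
  qed
qed

lemma cost_diag:
  assumes "\<And>a. d a a = 0" and "i \<le> length x"
  shows "cost x x i i = 0"
  using assms(2)
proof (induction i)
  case 0
  then show ?case by (simp add: cost_zero_zero)
next
  case (Suc i)
  then have "cost x x (Suc i) (Suc i) \<le> 0"
    using cost_le_subst[of "Suc i" "Suc i" x x] assms(1) by simp
  then show ?case using cost_nonneg[of x x "Suc i" "Suc i"] by simp
qed

lemma cost_eq_zero_imp_take_eq:
  assumes d_sep: "\<And>a b. d a b = 0 \<Longrightarrow> a = b"
  shows "i \<le> length x \<Longrightarrow> j \<le> length y \<Longrightarrow> cost x y i j = 0 \<Longrightarrow> take i x = take j y"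
proof (induction "i + j" arbitrary: i j rule: less_induct)
  case less
  show ?case
  proof (cases "i + j = 0")
    case False
    then have "0 < i + j" by simp
    with less.prems(1,2) show ?thesis
    proof (cases rule: cost_cases)
      case subst
      have "cost x y (i - 1) (j - 1) = 0" and "d (x ! (i - 1)) (y ! (j - 1)) powr p = 0"
        using subst less.prems(3) cost_nonneg[of x y "i - 1" "j - 1"]
          powr_ge_zero[of "d (x ! (i - 1)) (y ! (j - 1))" p] by linarith+
      then have "take (i - 1) x = take (j - 1) y" and "x ! (i - 1) = y ! (j - 1)"
        using less subst d_sep by auto
      moreover have "take i x = take (i - 1) x @ [x ! (i - 1)]" "take j y = take (j - 1) y @ [y ! (j - 1)]"
        using subst less.prems by (metis Suc_pred' take_Suc_conv_app_nth Suc_le_lessD)+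
      ultimately show ?thesis by simp
    next
      case (insert k)
      then show ?thesis
        using \<gamma>_pos[OF drop_take_nonempty] less.prems cost_nonneg[of x y i "j - k"] by fastforce
    next
      case (delete k)
      then show ?thesis
        using \<delta>_pos[OF drop_take_nonempty] less.prems cost_nonneg[of x y "i - k" j] by fastforce
    qed
  qed simp
qed

end

lemma lp_edit_cost_swap: "lp_edit_cost p d \<gamma> \<delta> \<Longrightarrow> lp_edit_cost p (\<lambda>a b. d b a) \<delta> \<gamma>"
  unfolding lp_edit_cost_def by auto

context lp_edit_cost
begin

lemma cost_swap: "lp_edit_cost.cost p (\<lambda>a b. d b a) \<delta> \<gamma> y x j i = cost x y i j"
  unfolding lp_edit_cost.cost_def[OF lp_edit_cost_swap[OF lp_edit_cost_axioms]] cost_def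
  by (subst Dtab_swap) (rule refl)

text \<open>The alignment of \<open>y[0..j)\<close> with \<open>z[0..k)\<close> is cut at position \<open>m\<close> of \<open>y\<close>; the part
  beyond the cut costs at least \<open>R\<close>, and \<open>R\<close> pays for trading the gap \<open>y[m..j)\<close> for \<open>z[k'..k)\<close>.\<close>

definition splits_at :: "'a list \<Rightarrow> 'a list \<Rightarrow> nat \<Rightarrow> nat \<Rightarrow> nat \<Rightarrow> bool" where
  "splits_at y z m j k \<longleftrightarrow> (\<exists>k' R. k' \<le> k \<and> 0 \<le> R \<and> cost y z m k' + R \<le> cost y z j k
     \<and> gap_transfer \<gamma> (drop k' (take k z)) (drop m (take j y)) R)"

lemma splits_at_refl: "splits_at y z m m k"
  unfolding splits_at_def using gap_transfer_refl[of \<gamma> "[]"] by (intro exI[of _ k] exI[of _ 0]) simp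

lemma splits_at_subst:
  assumes CL: "CL_gap_penalty \<gamma>" and \<gamma>_d: "\<And>a b. \<gamma> [b] - \<gamma> [a] \<le> d a b powr p"
    and "m < j" "0 < k" "j \<le> length y" "k \<le> length z"
    and split: "splits_at y z m (j - 1) (k - 1)"
    and cost: "cost y z j k = cost y z (j - 1) (k - 1) + d (y ! (j - 1)) (z ! (k - 1)) powr p"
  shows "splits_at y z m j k"
proof -
  obtain k' R where k': "k' \<le> k - 1" "0 \<le> R" "cost y z m k' + R \<le> cost y z (j - 1) (k - 1)"
    and transfer: "gap_transfer \<gamma> (drop k' (take (k - 1) z)) (drop m (take (j - 1) y)) R"
    using split unfolding splits_at_def by blast
  define b c where "b = y ! (j - 1)" and "c = z ! (k - 1)"
  have "drop k' (take k z) = drop k' (take (k - 1) z) @ [c]"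
    unfolding c_def using drop_take_split[of k' "k - 1" k z] drop_take_last[of k z] k'(1) assms by simp
  moreover have "drop m (take j y) = drop m (take (j - 1) y) @ [b]"
    unfolding b_def using drop_take_split[of m "j - 1" j y] drop_take_last[of j y] assms by simp
  moreover have "R + (\<gamma> [c] - \<gamma> [b]) \<le> R + d b c powr p" by (simp add: \<gamma>_d)
  ultimately have "gap_transfer \<gamma> (drop k' (take k z)) (drop m (take j y)) (R + d b c powr p)"
    using gap_transfer_snoc[OF CL transfer, of c b] by (simp add: gap_transfer_mono)
  then show ?thesis
    unfolding splits_at_def using k' cost unfolding b_def c_def
    by (intro exI[of _ k'] exI[of _ "R + d (y ! (j - 1)) (z ! (k - 1)) powr p"]) auto
qed

lemma splits_at_insert:
  assumes CL: "CL_gap_penalty \<gamma>"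
    and "m < j" "1 \<le> s" "s \<le> k" "j \<le> length y" "k \<le> length z"
    and split: "splits_at y z m j (k - s)"
    and cost: "cost y z j k = cost y z j (k - s) + \<gamma> (drop (k - s) (take k z))"
  shows "splits_at y z m j k"
proof -
  obtain k' R where k': "k' \<le> k - s" "0 \<le> R" "cost y z m k' + R \<le> cost y z j (k - s)"
    and transfer: "gap_transfer \<gamma> (drop k' (take (k - s) z)) (drop m (take j y)) R"
    using split unfolding splits_at_def by blast
  define U where "U = drop (k - s) (take k z)"
  have U: "U \<noteq> []" unfolding U_def using drop_take_nonempty assms by simp
  have "drop k' (take k z) = drop k' (take (k - s) z) @ U"
    unfolding U_def using drop_take_split[of k' "k - s" k z] k'(1) by simp
  moreover have "drop m (take j y) \<noteq> []" using assms by simp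
  ultimately have "gap_transfer \<gamma> (drop k' (take k z)) (drop m (take j y)) (R + \<gamma> U)"
    using gap_transfer_append_left[OF CL transfer k'(2) _ U] by simp
  then show ?thesis
    unfolding splits_at_def using k' cost \<gamma>_pos[OF U] unfolding U_def[symmetric]
    by (intro exI[of _ k'] exI[of _ "R + \<gamma> U"]) auto
qed

lemma splits_at_delete:
  assumes inc: "increasing_gp \<gamma>"
    and "m \<le> j - s" "1 \<le> s" "s \<le> j" "j \<le> length y"
    and split: "splits_at y z m (j - s) k"
    and cost: "cost y z j k = cost y z (j - s) k + \<delta> (drop (j - s) (take j y))"
  shows "splits_at y z m j k"
proof -
  obtain k' R where k': "k' \<le> k" "0 \<le> R" "cost y z m k' + R \<le> cost y z (j - s) k"
    and transfer: "gap_transfer \<gamma> (drop k' (take k z)) (drop m (take (j - s) y)) R"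
    using split unfolding splits_at_def by blast
  define V where "V = drop (j - s) (take j y)"
  have V: "0 < \<delta> V" unfolding V_def using drop_take_nonempty assms by (simp add: \<delta>_pos)
  have "drop m (take j y) = drop m (take (j - s) y) @ V"
    unfolding V_def using drop_take_split[of m "j - s" j y] assms by simp
  then have "gap_transfer \<gamma> (drop k' (take k z)) (drop m (take j y)) (R + \<delta> V)"
    using gap_transfer_append_right[OF inc transfer, of V] V by (simp add: gap_transfer_mono)
  then show ?thesis
    unfolding splits_at_def using k' cost V unfolding V_def[symmetric]
    by (intro exI[of _ k'] exI[of _ "R + \<delta> V"]) auto
qed

lemma splits_at_delete_across:
  assumes inc_\<gamma>: "increasing_gp \<gamma>" and inc_\<delta>: "increasing_gp \<delta>"
    and "j - s < m" "m \<le> j" "j \<le> length y" "k \<le> length z"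
    and cost: "cost y z j k = cost y z (j - s) k + \<delta> (drop (j - s) (take j y))"
  shows "splits_at y z m j k"
proof -
  have "cost y z m k \<le> cost y z (j - s) k + \<delta> (drop (j - s) (take m y))"
    using cost_le_delete[of k z "m - (j - s)" m y] assms by simp
  also have "\<delta> (drop (j - s) (take m y)) \<le> \<delta> (drop (j - s) (take m y) @ drop m (take j y))"
    using inc_\<delta>[unfolded increasing_gp_def, rule_format, of "drop (j - s) (take m y)" "[]"] assms
    by simp
  also have "drop (j - s) (take m y) @ drop m (take j y) = drop (j - s) (take j y)"
    using drop_take_split[of "j - s" m j y] assms by simp
  finally have "cost y z m k \<le> cost y z j k" using cost by simp
  then show ?thesis
    unfolding splits_at_def using gap_transfer_Nil[OF inc_\<gamma>]
    by (intro exI[of _ k] exI[of _ 0]) simp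
qed

lemma cost_splits_at:
  assumes CL: "CL_gap_penalty \<gamma>" and inc_\<delta>: "increasing_gp \<delta>"
    and \<gamma>_d: "\<And>a b. \<gamma> [b] - \<gamma> [a] \<le> d a b powr p"
  shows "m \<le> j \<Longrightarrow> j \<le> length y \<Longrightarrow> k \<le> length z \<Longrightarrow> splits_at y z m j k"
proof (induction "j + k" arbitrary: j k rule: less_induct)
  case less
  have inc_\<gamma>: "increasing_gp \<gamma>" using CL by (rule CL_gap_penalty_increasing)
  show ?case
  proof (cases "m = j")
    case True
    then show ?thesis by (simp add: splits_at_refl)
  next
    case False
    with less.prems have "m < j" "0 < j + k" by auto
    from less.prems(2,3) \<open>0 < j + k\<close> show ?thesis
    proof (cases rule: cost_cases)
      case subst
      have "splits_at y z m (j - 1) (k - 1)"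
        using less.hyps[of "j - 1" "k - 1"] less.prems subst \<open>m < j\<close> by simp
      from splits_at_subst[OF CL \<gamma>_d \<open>m < j\<close> subst(2) less.prems(2,3) this subst(3)]
      show ?thesis .
    next
      case (insert s)
      have "splits_at y z m j (k - s)"
        using less.hyps[of j "k - s"] less.prems insert by simp
      from splits_at_insert[OF CL \<open>m < j\<close> insert(1,2) less.prems(2,3) this insert(3)]
      show ?thesis .
    next
      case (delete s)
      show ?thesis
      proof (cases "m \<le> j - s")
        case True
        have "splits_at y z m (j - s) k"
          using less.hyps[of "j - s" k] less.prems delete True by simp
        from splits_at_delete[OF inc_\<gamma> True delete(1,2) less.prems(2) this delete(3)]
        show ?thesis .
      next
        case False
        then have "j - s < m" by simp
        from splits_at_delete_across[OF inc_\<gamma> inc_\<delta> this less.prems delete(3)]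
        show ?thesis .
      qed
    qed
  qed
qed

lemma root_cost_triangle_left_insert:
  assumes CL: "CL_gap_penalty \<gamma>" and inc_\<delta>: "increasing_gp \<delta>"
    and \<gamma>_d: "\<And>a b. \<gamma> [b] - \<gamma> [a] \<le> d a b powr p"
    and bounds: "i \<le> length x" "j \<le> length y" "k \<le> length z"
    and r: "1 \<le> r" "r \<le> j"
    and cost: "cost x y i j = cost x y i (j - r) + \<gamma> (drop (j - r) (take j y))"
    and IH: "\<And>k'. k' \<le> k \<Longrightarrow>
      cost x z i k' powr (1/p) \<le> cost x y i (j - r) powr (1/p) + cost y z (j - r) k' powr (1/p)"
  shows "cost x z i k powr (1/p) \<le> cost x y i j powr (1/p) + cost y z j k powr (1/p)"
proof -
  define Y where "Y = drop (j - r) (take j y)"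
  have Y: "0 < \<gamma> Y" unfolding Y_def using drop_take_nonempty r bounds by (simp add: \<gamma>_pos)
  obtain k' R where k': "k' \<le> k" "0 \<le> R" "cost y z (j - r) k' + R \<le> cost y z j k"
    and transfer: "gap_transfer \<gamma> (drop k' (take k z)) Y R"
    using cost_splits_at[OF CL inc_\<delta> \<gamma>_d, of "j - r" j y k z] bounds
    unfolding splits_at_def Y_def by auto
  obtain c where c: "0 \<le> c" "c \<le> \<gamma> Y + R" "cost x z i k \<le> cost x z i k' + c"
  proof (cases "k' = k")
    case True
    then show ?thesis using that[of 0] Y k'(2) by simp
  next
    case False
    define Z where "Z = drop k' (take k z)"
    have Z: "Z \<noteq> []" unfolding Z_def using k'(1) False bounds by simp
    have "cost x z i k \<le> cost x z i k' + \<gamma> Z"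
      using cost_le_insert[of i x "k - k'" k z] k'(1) False bounds unfolding Z_def by simp
    moreover have "\<gamma> Z \<le> \<gamma> Y + R"
      using transfer Z unfolding gap_transfer_def Z_def by (metis append_Nil2)
    ultimately show ?thesis using that[of "\<gamma> Z"] \<gamma>_pos[OF Z] by simp
  qed
  have c_root: "c powr (1/p) \<le> \<gamma> Y powr (1/p) + R powr (1/p)"
    using Y k'(2) c by (intro powr_inverse_subadditive[OF one_le_p]) auto
  have "cost x y i (j - r) + \<gamma> Y \<le> cost x y i j"
    using cost unfolding Y_def by simp
  then show ?thesis
    using lp_triangle_step[OF one_le_p cost_nonneg cost_nonneg cost_nonneg cost_nonneg
        less_imp_le[OF Y] k'(2) c(1) c(3) IH[OF k'(1)] c_root _ k'(3)] by blast
qed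

lemma root_cost_triangle_left_delete:
  assumes "1 \<le> r" "r \<le> i" "i \<le> length x" "k \<le> length z"
    and cost: "cost x y i j = cost x y (i - r) j + \<delta> (drop (i - r) (take i x))"
    and IH: "cost x z (i - r) k powr (1/p) \<le> cost x y (i - r) j powr (1/p) + cost y z j k powr (1/p)"
  shows "cost x z i k powr (1/p) \<le> cost x y i j powr (1/p) + cost y z j k powr (1/p)"
proof -
  define X where "X = drop (i - r) (take i x)"
  have X: "0 < \<delta> X" unfolding X_def using drop_take_nonempty assms by (simp add: \<delta>_pos)
  have edit: "cost x z i k \<le> cost x z (i - r) k + \<delta> X"
    unfolding X_def using cost_le_delete[of k z r i x] assms by simp
  show ?thesis
    by (rule lp_triangle_step[OF one_le_p cost_nonneg cost_nonneg cost_nonneg cost_nonneg _ _ _ edit IH,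
          of "\<delta> X" 0])
       (use X cost in \<open>simp_all add: X_def\<close>)
qed

lemma root_cost_triangle_subst:
  assumes d_triangle: "\<And>a b c. d a c \<le> d a b + d b c"
    and "0 < i" "0 < k" "i \<le> length x" "k \<le> length z"
    and xy: "cost x y i j = cost x y (i - 1) (j - 1) + d (x ! (i - 1)) (y ! (j - 1)) powr p"
    and yz: "cost y z j k = cost y z (j - 1) (k - 1) + d (y ! (j - 1)) (z ! (k - 1)) powr p"
    and IH: "cost x z (i - 1) (k - 1) powr (1/p)
      \<le> cost x y (i - 1) (j - 1) powr (1/p) + cost y z (j - 1) (k - 1) powr (1/p)"
  shows "cost x z i k powr (1/p) \<le> cost x y i j powr (1/p) + cost y z j k powr (1/p)"
proof -
  let ?xy = "d (x ! (i - 1)) (y ! (j - 1))" and ?yz = "d (y ! (j - 1)) (z ! (k - 1))"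
    and ?xz = "d (x ! (i - 1)) (z ! (k - 1))"
  have edit: "cost x z i k \<le> cost x z (i - 1) (k - 1) + ?xz powr p"
    using cost_le_subst[of i k x z] assms by simp
  have "(?xz powr p) powr (1/p) \<le> (?xy powr p) powr (1/p) + (?yz powr p) powr (1/p)"
    using d_triangle d_nonneg p_pos by (simp add: powr_powr)
  from lp_triangle_step[OF one_le_p cost_nonneg cost_nonneg cost_nonneg cost_nonneg _ _ _ edit IH this]
  show ?thesis using xy yz by simp
qed

lemma root_cost_triangle_swap:
  "lp_edit_cost.cost p (\<lambda>a b. d b a) \<delta> \<gamma> z x k i powr (1/p)
      \<le> lp_edit_cost.cost p (\<lambda>a b. d b a) \<delta> \<gamma> z y k j powr (1/p)
        + lp_edit_cost.cost p (\<lambda>a b. d b a) \<delta> \<gamma> y x j i powr (1/p)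
    \<longleftrightarrow> cost x z i k powr (1/p) \<le> cost x y i j powr (1/p) + cost y z j k powr (1/p)"
  by (simp add: cost_swap add.commute)

lemma root_cost_triangle_right_insert:
  assumes "1 \<le> s" "s \<le> k" "k \<le> length z" "i \<le> length x"
    and cost: "cost y z j k = cost y z j (k - s) + \<gamma> (drop (k - s) (take k z))"
    and IH: "cost x z i (k - s) powr (1/p) \<le> cost x y i j powr (1/p) + cost y z j (k - s) powr (1/p)"
  shows "cost x z i k powr (1/p) \<le> cost x y i j powr (1/p) + cost y z j k powr (1/p)"
proof -
  interpret swap: lp_edit_cost p "\<lambda>a b. d b a" \<delta> \<gamma>
    by (rule lp_edit_cost_swap[OF lp_edit_cost_axioms])
  have "swap.cost z x k i powr (1/p) \<le> swap.cost z y k j powr (1/p) + swap.cost y x j i powr (1/p)"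
    using cost IH by (intro swap.root_cost_triangle_left_delete[OF assms(1-4)])
      (simp_all add: cost_swap add.commute)
  then show ?thesis by (simp only: root_cost_triangle_swap)
qed

lemma root_cost_triangle_right_delete:
  assumes CL: "CL_gap_penalty \<delta>" and inc_\<gamma>: "increasing_gp \<gamma>"
    and \<delta>_d: "\<And>a b. \<delta> [a] - \<delta> [b] \<le> d a b powr p"
    and bounds: "i \<le> length x" "j \<le> length y" "k \<le> length z"
    and s: "1 \<le> s" "s \<le> j"
    and cost: "cost y z j k = cost y z (j - s) k + \<delta> (drop (j - s) (take j y))"
    and IH: "\<And>i'. i' \<le> i \<Longrightarrow>
      cost x z i' k powr (1/p) \<le> cost x y i' (j - s) powr (1/p) + cost y z (j - s) k powr (1/p)"
  shows "cost x z i k powr (1/p) \<le> cost x y i j powr (1/p) + cost y z j k powr (1/p)"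
proof -
  interpret swap: lp_edit_cost p "\<lambda>a b. d b a" \<delta> \<gamma>
    by (rule lp_edit_cost_swap[OF lp_edit_cost_axioms])
  have "\<delta> [b] - \<delta> [a] \<le> (\<lambda>a b. d b a) a b powr p" for a b
    using \<delta>_d by simp
  moreover have "swap.cost z y k j = swap.cost z y k (j - s) + \<delta> (drop (j - s) (take j y))"
    using cost by (simp add: cost_swap)
  moreover have "swap.cost z x k i' powr (1/p)
      \<le> swap.cost z y k (j - s) powr (1/p) + swap.cost y x (j - s) i' powr (1/p)" if "i' \<le> i" for i'
    using IH[OF that] by (simp only: root_cost_triangle_swap)
  ultimately have "swap.cost z x k i powr (1/p) \<le> swap.cost z y k j powr (1/p) + swap.cost y x j i powr (1/p)"
    using swap.root_cost_triangle_left_insert[OF CL inc_\<gamma> _ bounds(3,2,1) s] by blast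
  then show ?thesis by (simp only: root_cost_triangle_swap)
qed

lemma root_cost_triangle:
  assumes CL_\<gamma>: "CL_gap_penalty \<gamma>" and CL_\<delta>: "CL_gap_penalty \<delta>"
    and \<gamma>_d: "\<And>a b. \<gamma> [b] - \<gamma> [a] \<le> d a b powr p" and \<delta>_d: "\<And>a b. \<delta> [a] - \<delta> [b] \<le> d a b powr p"
    and d_triangle: "\<And>a b c. d a c \<le> d a b + d b c"
  shows "i \<le> length x \<Longrightarrow> j \<le> length y \<Longrightarrow> k \<le> length z \<Longrightarrow>
    cost x z i k powr (1/p) \<le> cost x y i j powr (1/p) + cost y z j k powr (1/p)"
proof (induction "i + j + k" arbitrary: i j k rule: less_induct)
  case less
  have inc_\<gamma>: "increasing_gp \<gamma>" and inc_\<delta>: "increasing_gp \<delta>"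
    using CL_\<gamma> CL_\<delta> by (simp_all add: CL_gap_penalty_increasing)
  show ?case
  proof (cases "i + j = 0")
    case True
    then show ?thesis using less.prems by (cases "k = 0") (simp_all add: cost_zero_zero cost_zero_left)
  next
    case False
    then have "0 < i + j" by simp
    from less.prems(1,2) this show ?thesis
    proof (cases rule: cost_cases)
      case (delete r)
      then show ?thesis
        using less.hyps[of "i - r" j k] less.prems
        by (intro root_cost_triangle_left_delete[OF delete(1,2) less.prems(1,3) delete(3)]) simp
    next
      case (insert r)
      then show ?thesis
        using less.hyps[of i "j - r"] less.prems
        by (intro root_cost_triangle_left_insert[OF CL_\<gamma> inc_\<delta> \<gamma>_d less.prems insert]) simp
    next
      case subst
      note x_y = subst
      then have "0 < j + k" by simp
      from less.prems(2,3) this show ?thesis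
      proof (cases rule: cost_cases)
        case subst
        then show ?thesis
          using less.hyps[of "i - 1" "j - 1" "k - 1"] less.prems x_y
          by (intro root_cost_triangle_subst[OF d_triangle x_y(1) subst(2) less.prems(1,3) x_y(3) subst(3)])
            simp
      next
        case (insert s)
        then show ?thesis
          using less.hyps[of i j "k - s"] less.prems
          by (intro root_cost_triangle_right_insert[OF insert(1,2) less.prems(3,1) insert(3)]) simp
      next
        case (delete s)
        then show ?thesis
          using less.hyps[of _ "j - s" k] less.prems
          by (intro root_cost_triangle_right_delete[OF CL_\<delta> inc_\<gamma> \<delta>_d less.prems delete]) simp
      qed
    qed
  qed
qed

end

theorem theorem3p10:
  fixes p :: real and d :: "'a \<Rightarrow> 'a \<Rightarrow> real" and \<gamma> \<delta> :: "'a list \<Rightarrow> real"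
  assumes "1 \<le> p"
    and "quasi_metric d" and "separating d"
    and "CL_gap_penalty \<gamma>" and "CL_gap_penalty \<delta>"
    and "\<forall>a b. \<gamma> [b] - \<gamma> [a] \<le> (d a b) powr p"
    and "\<forall>a b. \<delta> [a] - \<delta> [b] \<le> (d a b) powr p"
  shows "quasi_metric (lp_edit_distance p d (\<lambda>w. (\<gamma> w) powr (1 / p)) (\<lambda>w. (\<delta> w) powr (1 / p)))
       \<and> separating (lp_edit_distance p d (\<lambda>w. (\<gamma> w) powr (1 / p)) (\<lambda>w. (\<delta> w) powr (1 / p)))"
proof -
  let ?D = "lp_edit_distance p d (\<lambda>w. (\<gamma> w) powr (1 / p)) (\<lambda>w. (\<delta> w) powr (1 / p))"
  have d_nonneg: "\<And>a b. 0 \<le> d a b" and d_refl: "\<And>a. d a a = 0"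
    and d_triangle: "\<And>a b c. d a c \<le> d a b + d b c"
    using assms(2) unfolding quasi_metric_def by blast+
  interpret lp_edit_cost p d \<gamma> \<delta>
    using assms(1,4,5) d_nonneg by unfold_locales (simp_all add: CL_gap_penalty_gap_penalty)
  have D_eq: "?D x y = cost x y (length x) (length y) powr (1/p)" for x y
    unfolding lp_edit_distance_def by (rule D_eq_root_cost)
  have d_sep: "\<And>a b. d a b = 0 \<Longrightarrow> a = b" using assms(3) unfolding separating_def by blast
  have D_zero: "?D x y = 0 \<longleftrightarrow> x = y" for x y
  proof
    assume "?D x y = 0"
    then have "cost x y (length x) (length y) = 0" unfolding D_eq by simp
    then show "x = y" using cost_eq_zero_imp_take_eq[OF d_sep order_refl order_refl] by simp
  qed (simp add: D_eq cost_diag[OF d_refl order_refl] p_pos)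
  have "?D x z \<le> ?D x y + ?D y z" for x y z
    unfolding D_eq using assms(4-7) d_triangle by (intro root_cost_triangle) auto
  then show ?thesis unfolding quasi_metric_def separating_def using D_zero D_eq by fastforce
qed

end
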